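(* The topology on $\underline{\mathcal{X}}$ induced by $d_{\underline{\mathcal{X}}}$ is strictly finer than the subspace topology induced by the product topology on $\mathcal{X}^{\mathbb{Z}_-}$ if and only if $(\mathcal{X},d_{\mathcal{X}})$ is unbounded. In particular, if $\mathcal{X}$ is compact, then so is $\underline{\mathcal{X}}$.
   Context: $\mathbb{Z}_-=\{\dots,-2,-1\}$. $(\mathcal{X},d_{\mathcal{X}})$ is a Polish space with a complete metric. $\mathbf{w}=(w_t)_{t\le-1}\subseteq(0,1)$ is a monotone sequence with $\sum_{t\le-1}w_t=1$ and $\sup_{n\ge1}(\sup_{t\le-1}w_t/w_{t-n})^{1/n}<\infty$. Fix $x_*\in\mathcal{X}$. $\underline{\mathcal{X}}$ is the set of $\mathbf{x}\in\mathcal{X}^{\mathbb{Z}_-}$ with $\sum_{t\le-1}w_td_{\mathcal{X}}(x_t,x_* )<\infty$, equipped with the metric $d_{\underline{\mathcal{X}}}(\mathbf{x}^1,\mathbf{x}^2)=\sum_{t\le-1}w_td_{\mathcal{X}}(x^1_t,x^2_t)$. *)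

theory Defs
  imports "HOL-Analysis.Analysis"
begin

abbreviation Zneg :: "int set" where "Zneg \<equiv> {..-1}"

definition weight_seq :: "(int \<Rightarrow> real) \<Rightarrow> bool" where
  "weight_seq w \<longleftrightarrow>
     (\<forall>t\<in>Zneg. 0 < w t \<and> w t < 1)
   \<and> (mono_on Zneg w \<or> antimono_on Zneg w)
   \<and> (w has_sum 1) Zneg
   \<and> (\<exists>C. \<forall>n::nat. n \<ge> 1 \<longrightarrow> (\<forall>t\<in>Zneg. root n (w t / w (t - int n)) \<le> C))"

definition seq_space :: "(int \<Rightarrow> real) \<Rightarrow> 'a::metric_space \<Rightarrow> (int \<Rightarrow> 'a) set" where
  "seq_space w xs = {x \<in> PiE Zneg (\<lambda>_. UNIV). (\<lambda>t. w t * dist (x t) xs) summable_on Zneg}"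

definition seq_dist :: "(int \<Rightarrow> real) \<Rightarrow> (int \<Rightarrow> 'a::metric_space) \<Rightarrow> (int \<Rightarrow> 'a) \<Rightarrow> real" where
  "seq_dist w x y = (\<Sum>\<^sub>\<infinity>t\<in>Zneg. w t * dist (x t) (y t))"

definition seq_topology :: "(int \<Rightarrow> real) \<Rightarrow> 'a::metric_space \<Rightarrow> (int \<Rightarrow> 'a) topology" where
  "seq_topology w xs = Metric_space.mtopology (seq_space w xs) (seq_dist w)"

definition seq_prod_topology :: "(int \<Rightarrow> real) \<Rightarrow> 'a::metric_space \<Rightarrow> (int \<Rightarrow> 'a) topology" where
  "seq_prod_topology w xs = subtopology (product_topology (\<lambda>_. euclidean) Zneg) (seq_space w xs)"

definition finer_topology :: "'b topology \<Rightarrow> 'b topology \<Rightarrow> bool" where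
  "finer_topology T1 T2 \<longleftrightarrow> topspace T1 = topspace T2 \<and> (\<forall>U. openin T2 U \<longrightarrow> openin T1 U)"

definition strictly_finer_topology :: "'b topology \<Rightarrow> 'b topology \<Rightarrow> bool" where
  "strictly_finer_topology T1 T2 \<longleftrightarrow> finer_topology T1 T2 \<and> T1 \<noteq> T2"

end

theory Submission
  imports Defs
begin

text \<open>Each coordinate map is Lipschitz with constant \<open>1 / w t\<close> for the weighted metric, so the
weighted topology is always finer than the product topology. If \<open>X\<close> has diameter \<open>D\<close>, the
coordinates outside a finite index set \<open>F\<close> contribute at most \<open>D\<close> times the tail of \<open>w\<close> beyond
\<open>F\<close>, which can be made small; so closeness on \<open>F\<close> alone forces closeness in the weighted
metric, the two topologies agree, and Tychonoff's theorem gives compactness. If \<open>X\<close> is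
unbounded, every product neighbourhood of the constant sequence \<open>x\<^sub>*\<close> leaves some coordinate
\<open>t\<close> free, and moving that coordinate farther than \<open>1 / w t\<close> from \<open>x\<^sub>*\<close> leaves the weighted unit
ball.\<close>

lemma weight_seq_pos: "weight_seq w \<Longrightarrow> t \<in> Zneg \<Longrightarrow> 0 < w t"
  by (simp add: weight_seq_def)

lemma weight_seq_summable: "weight_seq w \<Longrightarrow> w summable_on Zneg"
  by (auto simp: weight_seq_def summable_on_def)

lemma finer_topology_iff_continuous_map_id:
  "finer_topology X Y \<longleftrightarrow> topspace X = topspace Y \<and> continuous_map X Y id"
  by (metis finer_topology_def topology_finer_continuous_id)

lemma infsum_tail_le:
  fixes f :: "'a \<Rightarrow> real"
  assumes "f summable_on A" "\<epsilon> > 0"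
  obtains F where "finite F" "F \<subseteq> A" "infsum f (A - F) \<le> \<epsilon>"
proof -
  obtain F where F: "finite F" "F \<subseteq> A" "dist (sum f F) (infsum f A) \<le> \<epsilon>"
    using infsum_finite_approximation[OF assms] by blast
  have "infsum f (A - F) = infsum f A - sum f F"
    using infsum_Diff[OF assms(1) _ F(2)] F(1) by simp
  with F that show ?thesis by (simp add: dist_real_def)
qed

lemma openin_product_topology_fun_upd:
  assumes "openin (product_topology X I) T" "x \<in> T" "infinite I"
  obtains t where "t \<in> I" "\<And>a. a \<in> topspace (X t) \<Longrightarrow> x(t := a) \<in> T"
proof -
  obtain V where fin: "finite {i \<in> I. V i \<noteq> topspace (X i)}"
    and x: "x \<in> Pi\<^sub>E I V" and VT: "Pi\<^sub>E I V \<subseteq> T"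
    using assms(1,2) unfolding openin_product_topology_alt by blast
  then obtain t where "t \<in> I" "V t = topspace (X t)"
    using assms(3) by (metis (mono_tags, lifting) finite_subset mem_Collect_eq subsetI)
  with x VT that show ?thesis by (fastforce simp: PiE_iff extensional_def)
qed

context
  fixes w :: "int \<Rightarrow> real"
  assumes w_pos: "\<And>t. t \<in> Zneg \<Longrightarrow> 0 < w t"
begin

lemma seq_dist_summable:
  assumes "x \<in> seq_space w xs" "y \<in> seq_space w xs"
  shows "(\<lambda>t. w t * dist (x t) (y t)) summable_on Zneg"
proof -
  have "(\<lambda>t. w t * dist (x t) xs + w t * dist (y t) xs) summable_on Zneg"
    using assms by (intro summable_on_add) (auto simp: seq_space_def)
  then show ?thesis
  proof (rule summable_on_comparison_test)
    fix t assume t: "t \<in> Zneg"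
    have "dist (x t) (y t) \<le> dist (x t) xs + dist (y t) xs"
      by (simp add: dist_triangle2)
    with w_pos[OF t]
    show "w t * dist (x t) (y t) \<le> w t * dist (x t) xs + w t * dist (y t) xs"
      by (simp add: distrib_left[symmetric])
    show "0 \<le> w t * dist (x t) (y t)" using w_pos[OF t] by simp
  qed
qed

lemma weighted_dist_le_seq_dist:
  assumes "x \<in> seq_space w xs" "y \<in> seq_space w xs" "t \<in> Zneg"
  shows "w t * dist (x t) (y t) \<le> seq_dist w x y"
  using finite_sum_le_infsum[OF seq_dist_summable[OF assms(1,2)], of "{t}"] assms(3) w_pos
  by (simp add: seq_dist_def less_imp_le)

lemma Metric_space_seq_space: "Metric_space (seq_space w xs) (seq_dist w)"
proof
  fix x y :: "int \<Rightarrow> 'a"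
  show "0 \<le> seq_dist w x y"
    unfolding seq_dist_def using w_pos by (intro infsum_nonneg) (simp add: less_imp_le)
  show "seq_dist w x y = seq_dist w y x"
    unfolding seq_dist_def by (simp add: dist_commute)
next
  fix x y :: "int \<Rightarrow> 'a"
  assume x: "x \<in> seq_space w xs" and y: "y \<in> seq_space w xs"
  show "seq_dist w x y = 0 \<longleftrightarrow> x = y"
  proof
    assume 0: "seq_dist w x y = 0"
    have "x t = y t" if "t \<in> Zneg" for t
      using weighted_dist_le_seq_dist[OF x y that] 0 w_pos[OF that]
      by (simp add: mult_le_0_iff)
    moreover have "x \<in> extensional Zneg" "y \<in> extensional Zneg"
      using x y by (auto simp: seq_space_def PiE_def)
    ultimately show "x = y" by (metis extensionalityI)
  qed (simp add: seq_dist_def)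
next
  fix x y z :: "int \<Rightarrow> 'a"
  assume x: "x \<in> seq_space w xs" and y: "y \<in> seq_space w xs" and z: "z \<in> seq_space w xs"
  have "seq_dist w x z \<le> (\<Sum>\<^sub>\<infinity>t\<in>Zneg. w t * dist (x t) (y t) + w t * dist (y t) (z t))"
    unfolding seq_dist_def
  proof (rule infsum_mono)
    show "(\<lambda>t. w t * dist (x t) (y t) + w t * dist (y t) (z t)) summable_on Zneg"
      by (intro summable_on_add seq_dist_summable[OF x y] seq_dist_summable[OF y z])
    fix t assume "t \<in> Zneg"
    with w_pos show "w t * dist (x t) (z t) \<le> w t * dist (x t) (y t) + w t * dist (y t) (z t)"
      by (simp add: distrib_left[symmetric] dist_triangle)
  qed (rule seq_dist_summable[OF x z])
  also have "\<dots> = seq_dist w x y + seq_dist w y z"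
    unfolding seq_dist_def by (intro infsum_add seq_dist_summable[OF x y] seq_dist_summable[OF y z])
  finally show "seq_dist w x z \<le> seq_dist w x y + seq_dist w y z" .
qed

lemma continuous_map_seq_topology_coordinate:
  assumes t: "t \<in> Zneg"
  shows "continuous_map (seq_topology w xs) euclidean (\<lambda>x. x t)"
proof -
  interpret M: Metric_space "seq_space w xs" "seq_dist w" by (rule Metric_space_seq_space)
  show ?thesis
    unfolding seq_topology_def M.continuous_map_from_metric
  proof (intro conjI ballI allI impI)
    fix a U assume a: "a \<in> seq_space w xs" and U: "openin euclidean U \<and> a t \<in> U"
    then obtain \<epsilon> where \<epsilon>: "\<epsilon> > 0" "ball (a t) \<epsilon> \<subseteq> U" by (auto simp: open_contains_ball)
    show "\<exists>r>0. \<forall>x. x \<in> seq_space w xs \<and> seq_dist w a x < r \<longrightarrow> x t \<in> U"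
    proof (intro exI conjI allI impI)
      show "0 < w t * \<epsilon>" using \<epsilon> w_pos[OF t] by simp
      fix x assume "x \<in> seq_space w xs \<and> seq_dist w a x < w t * \<epsilon>"
      then have "w t * dist (a t) (x t) < w t * \<epsilon>"
        using weighted_dist_le_seq_dist[OF a _ t] by fastforce
      then show "x t \<in> U" using w_pos[OF t] \<epsilon>(2) by auto
    qed
  qed simp
qed

lemma finer_seq_topology: "finer_topology (seq_topology w xs) (seq_prod_topology w xs)"
proof -
  interpret M: Metric_space "seq_space w xs" "seq_dist w" by (rule Metric_space_seq_space)
  have top: "topspace (seq_topology w xs) = seq_space w xs"
    by (simp add: seq_topology_def)
  moreover have "topspace (seq_prod_topology w xs) = seq_space w xs"
    by (auto simp: seq_prod_topology_def seq_space_def)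
  moreover have "continuous_map (seq_topology w xs) (seq_prod_topology w xs) id"
    unfolding seq_prod_topology_def
  proof (rule continuous_map_into_subtopology)
    show "continuous_map (seq_topology w xs) (product_topology (\<lambda>_. euclidean) Zneg) id"
      using continuous_map_seq_topology_coordinate
      by (auto simp: continuous_map_componentwise top seq_space_def PiE_def)
  qed (simp add: top)
  ultimately show ?thesis by (simp add: finer_topology_iff_continuous_map_id)
qed

lemma seq_space_eq_PiE_if_bounded:
  fixes xs :: "'a::metric_space"
  assumes "w summable_on Zneg" "bounded (UNIV :: 'a set)"
  shows "seq_space w xs = PiE Zneg (\<lambda>_. UNIV)"
proof -
  obtain e where e: "\<And>y. dist y xs \<le> e"
    using assms(2) bounded_any_center[of UNIV xs] by (auto simp: dist_commute)
  have "(\<lambda>t. w t * dist (x t) xs) summable_on Zneg" for x :: "int \<Rightarrow> 'a"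
    using summable_on_cmult_left[OF assms(1), of e]
  proof (rule summable_on_comparison_test)
    fix t assume "t \<in> Zneg"
    with w_pos[of t] e[of "x t"]
    show "w t * dist (x t) xs \<le> w t * e" "0 \<le> w t * dist (x t) xs" by simp_all
  qed
  then show ?thesis by (auto simp: seq_space_def)
qed

lemma seq_prod_topology_eq_product_topology_if_bounded:
  fixes xs :: "'a::metric_space"
  assumes "w summable_on Zneg" "bounded (UNIV :: 'a set)"
  shows "seq_prod_topology w xs = product_topology (\<lambda>_. euclidean) Zneg"
  by (simp add: seq_prod_topology_def seq_space_eq_PiE_if_bounded[OF assms] subtopology_superset)

lemma seq_dist_le_if_close_on_finite:
  fixes xs :: "'a::metric_space"
  assumes w: "w summable_on Zneg" and D: "\<And>a b::'a. dist a b \<le> D"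
    and x: "x \<in> seq_space w xs" and y: "y \<in> seq_space w xs"
    and F: "finite F" "F \<subseteq> Zneg"
    and close: "\<And>t. t \<in> F \<Longrightarrow> dist (x t) (y t) \<le> \<rho>" and "0 \<le> \<rho>"
  shows "seq_dist w x y \<le> \<rho> * infsum w Zneg + D * infsum w (Zneg - F)"
proof -
  let ?g = "\<lambda>t. w t * dist (x t) (y t)"
  have g: "?g summable_on Zneg" by (rule seq_dist_summable[OF x y])
  have "seq_dist w x y = sum ?g F + infsum ?g (Zneg - F)"
    using infsum_Diff[OF g _ F(2)] F(1) by (simp add: seq_dist_def)
  moreover have "sum ?g F \<le> \<rho> * infsum w Zneg"
  proof -
    have "sum ?g F \<le> (\<Sum>t\<in>F. w t * \<rho>)"
      using close w_pos F(2) by (intro sum_mono mult_left_mono) (auto simp: less_imp_le)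
    also have "\<dots> = \<rho> * sum w F" by (simp add: sum_distrib_left mult.commute)
    also have "\<dots> \<le> \<rho> * infsum w Zneg"
      using F w_pos \<open>0 \<le> \<rho>\<close>
      by (intro mult_left_mono finite_sum_le_infsum w) (auto simp: less_imp_le)
    finally show ?thesis .
  qed
  moreover have "infsum ?g (Zneg - F) \<le> infsum (\<lambda>t. D * w t) (Zneg - F)"
    using summable_on_Diff[OF g _ F(2)] summable_on_Diff[OF w _ F(2)] F D w_pos
    by (intro infsum_mono summable_on_cmult_right) (auto simp: mult.commute intro: mult_left_mono)
  moreover have "infsum (\<lambda>t. D * w t) (Zneg - F) = D * infsum w (Zneg - F)"
    by (rule infsum_cmult_right')
  ultimately show ?thesis by linarith
qed

lemma continuous_map_product_topology_seq_topology_if_bounded: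
  fixes xs :: "'a::metric_space"
  assumes w: "w summable_on Zneg" and bdd: "bounded (UNIV :: 'a set)"
  shows "continuous_map (product_topology (\<lambda>_. euclidean) Zneg) (seq_topology w xs) id"
proof -
  interpret M: Metric_space "seq_space w xs" "seq_dist w" by (rule Metric_space_seq_space)
  obtain D where D: "\<And>a b::'a. dist a b \<le> D"
    using bdd by (auto simp: bounded_two_points)
  have D0: "0 \<le> D" using D[of xs xs] by simp
  define S where "S = infsum w Zneg"
  have S0: "0 \<le> S" unfolding S_def using w_pos by (intro infsum_nonneg) (simp add: less_imp_le)
  have space: "seq_space w xs = PiE Zneg (\<lambda>_. UNIV)"
    by (rule seq_space_eq_PiE_if_bounded[OF w bdd])
  show ?thesis
    unfolding seq_topology_def M.continuous_map_to_metric
  proof (intro ballI allI impI)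
    fix x :: "int \<Rightarrow> 'a" and r :: real
    assume x: "x \<in> topspace (product_topology (\<lambda>_. euclidean) Zneg)" and r: "0 < r"
    obtain F where F: "finite F" "F \<subseteq> Zneg" "infsum w (Zneg - F) \<le> r / (2 * (D + 1))"
      using infsum_tail_le[OF w, of "r / (2 * (D + 1))"] r D0 by auto
    define \<rho> where "\<rho> = r / (2 * (S + 1))"
    define V where "V i = (if i \<in> F then ball (x i) \<rho> else UNIV)" for i
    show "\<exists>U. openin (product_topology (\<lambda>_. euclidean) Zneg) U \<and> x \<in> U \<and>
              (\<forall>y\<in>U. id y \<in> M.mball (id x) r)"
    proof (intro exI conjI ballI)
      show "openin (product_topology (\<lambda>_. euclidean) Zneg) (PiE Zneg V)"
        unfolding openin_PiE_gen by (rule disjI2, rule conjI, rule finite_subset[OF _ F(1)])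
          (auto simp: V_def)
      show "x \<in> PiE Zneg V"
        using x r S0 by (auto simp: V_def \<rho>_def PiE_iff)
      fix y assume y: "y \<in> PiE Zneg V"
      have xy: "x \<in> seq_space w xs" "y \<in> seq_space w xs"
        using x y by (auto simp: space PiE_iff)
      have "dist (x t) (y t) \<le> \<rho>" if "t \<in> F" for t
        using PiE_mem[OF y] F(2) that by (force simp: V_def)
      then have "seq_dist w x y \<le> \<rho> * S + D * infsum w (Zneg - F)"
        unfolding S_def using r S0
        by (intro seq_dist_le_if_close_on_finite[OF w D xy F(1,2)]) (auto simp: \<rho>_def S_def)
      also have "\<dots> < r / 2 + r / 2"
      proof (rule add_less_le_mono)
        show "\<rho> * S < r / 2" using r S0 by (simp add: \<rho>_def field_simps)
        have "D * infsum w (Zneg - F) \<le> D * (r / (2 * (D + 1)))"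
          using F(3) D0 by (rule mult_left_mono)
        also have "\<dots> \<le> r / 2" using r D0 by (simp add: field_simps)
        finally show "D * infsum w (Zneg - F) \<le> r / 2" .
      qed
      finally show "id y \<in> M.mball (id x) r" using xy by simp
    qed
  qed
qed

lemma seq_topology_eq_product_topology_if_bounded:
  fixes xs :: "'a::metric_space"
  assumes "w summable_on Zneg" "bounded (UNIV :: 'a set)"
  shows "seq_topology w xs = product_topology (\<lambda>_. euclidean) Zneg"
  using finer_seq_topology[of xs] continuous_map_product_topology_seq_topology_if_bounded[OF assms]
  unfolding seq_prod_topology_eq_product_topology_if_bounded[OF assms] finer_topology_def
  by (metis topology_eq topology_finer_continuous_id)

lemma seq_topology_neq_seq_prod_topology_if_unbounded:
  fixes xs :: "'a::metric_space"
  assumes "\<not> bounded (UNIV :: 'a set)"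
  shows "seq_topology w xs \<noteq> seq_prod_topology w xs"
proof
  assume eq: "seq_topology w xs = seq_prod_topology w xs"
  interpret M: Metric_space "seq_space w xs" "seq_dist w" by (rule Metric_space_seq_space)
  define x0 where "x0 = restrict (\<lambda>_. xs) Zneg"
  have x0_upd: "x0(t := a) \<in> seq_space w xs" if "t \<in> Zneg" for t a
  proof -
    have "(\<lambda>s. w s * dist ((x0(t := a)) s) xs) summable_on {t}" by simp
    then have "(\<lambda>s. w s * dist ((x0(t := a)) s) xs) summable_on Zneg"
      using that by (subst summable_on_cong_neutral[where T = "{t}"]) (auto simp: x0_def)
    then show ?thesis using that by (auto simp: seq_space_def x0_def PiE_iff extensional_def)
  qed
  have x0: "x0 \<in> seq_space w xs" using x0_upd[of "-1" "x0 (-1)"] by simp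
  have "openin (seq_prod_topology w xs) (M.mball x0 1)"
    using eq[symmetric] by (simp add: seq_topology_def)
  then obtain T where T: "openin (product_topology (\<lambda>_. euclidean) Zneg) T"
    and ball_eq: "M.mball x0 1 = T \<inter> seq_space w xs"
    unfolding seq_prod_topology_def openin_subtopology by blast
  have "x0 \<in> T" using ball_eq x0 by (metis IntE M.centre_in_mball_iff zero_less_one)
  then obtain t where t: "t \<in> Zneg" and upd_T: "\<And>a. x0(t := a) \<in> T"
    using openin_product_topology_fun_upd[OF T] infinite_Iic by (metis UNIV_I topspace_euclidean)
  obtain a where a: "1 / w t < dist xs a"
    using assms bounded_any_center[of UNIV xs] by (meson UNIV_I not_le)
  have "seq_dist w x0 (x0(t := a)) < 1"
    using ball_eq upd_T x0_upd[OF t] by auto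
  moreover have "w t * dist (x0 t) ((x0(t := a)) t) \<le> seq_dist w x0 (x0(t := a))"
    by (rule weighted_dist_le_seq_dist[OF x0 x0_upd[OF t] t])
  moreover have "1 < w t * dist (x0 t) ((x0(t := a)) t)"
    using a w_pos[OF t] t by (simp add: x0_def field_simps)
  ultimately show False by linarith
qed

end

theorem lemmaB1:
  fixes w :: "int \<Rightarrow> real" and xs :: "'a::polish_space"
  assumes "weight_seq w"
  shows "(strictly_finer_topology (seq_topology w xs) (seq_prod_topology w xs)
            \<longleftrightarrow> \<not> bounded (UNIV :: 'a set))
       \<and> (compact (UNIV :: 'a set) \<longrightarrow> compact_space (seq_topology w xs))"
proof -
  note pos = weight_seq_pos[OF assms] and summable = weight_seq_summable[OF assms]
  let ?P = "product_topology (\<lambda>_. euclidean :: 'a topology) Zneg"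
  have bounded_eq: "seq_topology w xs = ?P" "seq_prod_topology w xs = ?P"
    if "bounded (UNIV :: 'a set)"
    using seq_topology_eq_product_topology_if_bounded[OF pos summable that]
      seq_prod_topology_eq_product_topology_if_bounded[OF pos summable that] by auto
  have "strictly_finer_topology (seq_topology w xs) (seq_prod_topology w xs)
          \<longleftrightarrow> \<not> bounded (UNIV :: 'a set)"
    using finer_seq_topology[where w = w and xs = xs, OF pos] bounded_eq
      seq_topology_neq_seq_prod_topology_if_unbounded[where w = w and xs = xs, OF pos]
    unfolding strictly_finer_topology_def by auto
  moreover have "compact_space (seq_topology w xs)" if "compact (UNIV :: 'a set)"
  proof -
    have "compact_space (euclidean :: 'a topology)" using that by (simp add: compact_space_def)
    then show ?thesis
      by (simp add: bounded_eq[OF compact_imp_bounded[OF that]] compact_space_product_topology)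
  qed
  ultimately show ?thesis by blast
qed

end
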